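(* TDS reduces (via a computable many-one reduction) to TDS$_{01}$; moreover, the reduction preserves eventual periodicity and non-eventual periodicity of solutions, i.e., an instance has an eventually-periodic (resp. non-eventually-periodic) solution iff its image does.
   Context: An instance of TDS consists of a rational discount factor $0<\lambda<1$, a rational target $t$, and rational weights $a,b$; a solution is an infinite sequence $w\in\{a,b\}^\omega$ with $\sum_{i=0}^\infty w(i)\lambda^i=t$. An instance of TDS$_{01}$ consists of a rational discount factor $0<\lambda<1$ and a rational target $t$; a solution is an infinite sequence $w\in\{0,1\}^\omega$ (indexed from $1$) with $\sum_{i=1}^\infty w(i)\lambda^i=t$. A sequence is eventually periodic if it has the form $uv^\omega$ with finite $u$ and nonempty finite $v$. *)

theory Defs
  imports Complex_Main
begin

definition TDS_sol :: "rat \<Rightarrow> rat \<Rightarrow> rat \<Rightarrow> rat \<Rightarrow> (nat \<Rightarrow> rat) \<Rightarrow> bool" where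
  "TDS_sol lam t a b w \<longleftrightarrow>
     (\<forall>i. w i \<in> {a, b}) \<and>
     (\<lambda>i. real_of_rat (w i) * real_of_rat lam ^ i) sums real_of_rat t"

text \<open>A TDS01 solution: w in {0,1}^omega indexed from 1; we store it as
  s :: nat => rat with s k = w(k+1), so the sum is sum_k s k * lambda^(k+1).\<close>
definition TDS01_sol :: "rat \<Rightarrow> rat \<Rightarrow> (nat \<Rightarrow> rat) \<Rightarrow> bool" where
  "TDS01_sol lam t s \<longleftrightarrow>
     (\<forall>k. s k \<in> {0, 1}) \<and>
     (\<lambda>k. real_of_rat (s k) * real_of_rat lam ^ (Suc k)) sums real_of_rat t"

text \<open>Eventually periodic = of the form u v^omega with v nonempty.\<close>
definition eventually_periodic :: "(nat \<Rightarrow> 'a) \<Rightarrow> bool" where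
  "eventually_periodic w \<longleftrightarrow> (\<exists>n p. p > 0 \<and> (\<forall>i\<ge>n. w (i + p) = w i))"

text \<open>The explicit (evidently computable: rational arithmetic and equality tests)
  reduction mapping a TDS instance (lambda,t,a,b) to a TDS01 instance (lambda',t').\<close>
definition tds_red :: "rat \<Rightarrow> rat \<Rightarrow> rat \<Rightarrow> rat \<Rightarrow> rat \<times> rat" where
  "tds_red lam t a b =
     (if a \<noteq> b then (lam, lam * (t - a / (1 - lam)) / (b - a))
      else if t = a / (1 - lam) then (1/2, 1) else (1/2, 2))"

end

theory Submission
  imports Defs
begin

text \<open>For \<open>a \<noteq> b\<close> the affine bijection \<open>x \<mapsto> a + (b - a) x\<close> maps \<open>{0,1}\<close> onto \<open>{a,b}\<close>,
  and subtracting the geometric series \<open>a/(1 - \<lambda>)\<close> and rescaling by \<open>\<lambda>/(b - a)\<close>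
  turns \<open>\<Sum>\<^sub>i w(i) \<lambda>\<^sup>i = t\<close> into a \<open>TDS\<^sub>0\<^sub>1\<close> equation with the same discount factor.
  Since an injective letter-to-letter map neither creates nor destroys eventual periodicity,
  solutions correspond together with their periodicity. For \<open>a = b\<close> the only candidate
  solution is the constant word, and it is matched with the instance \<open>(1/2, 1)\<close>, whose
  unique solution is \<open>1\<^sup>\<omega>\<close>, or with \<open>(1/2, 2)\<close>, which has no solution at all.\<close>

lemma eventually_periodic_const: "eventually_periodic (\<lambda>_. c)"
  unfolding eventually_periodic_def by (intro exI[of _ 0] exI[of _ 1]) simp

lemma eventually_periodic_comp_inj:
  assumes "inj f"
  shows "eventually_periodic (f \<circ> w) \<longleftrightarrow> eventually_periodic w"
  using injD[OF assms] unfolding eventually_periodic_def comp_def by metis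

definition periodicity_correspondence :: "((nat \<Rightarrow> 'a) \<Rightarrow> bool) \<Rightarrow> ((nat \<Rightarrow> 'b) \<Rightarrow> bool) \<Rightarrow> bool"
  where "periodicity_correspondence P Q \<longleftrightarrow>
    (\<forall>w. P w \<longrightarrow> (\<exists>s. Q s \<and> (eventually_periodic s \<longleftrightarrow> eventually_periodic w))) \<and>
    (\<forall>s. Q s \<longrightarrow> (\<exists>w. P w \<and> (eventually_periodic w \<longleftrightarrow> eventually_periodic s)))"

lemma periodicity_correspondence_inj_comp:
  assumes "inj f" and "inj g"
    and "\<And>w. P w \<Longrightarrow> Q (f \<circ> w)" and "\<And>s. Q s \<Longrightarrow> P (g \<circ> s)"
  shows "periodicity_correspondence P Q"
  unfolding periodicity_correspondence_def
  using assms eventually_periodic_comp_inj[OF assms(1)] eventually_periodic_comp_inj[OF assms(2)]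
  by blast

lemma periodicity_correspondence_ex_iff:
  assumes "periodicity_correspondence P Q"
  shows "(\<exists>w. P w \<and> R (eventually_periodic w)) \<longleftrightarrow> (\<exists>s. Q s \<and> R (eventually_periodic s))"
proof
  assume "\<exists>w. P w \<and> R (eventually_periodic w)"
  then obtain w where "P w" "R (eventually_periodic w)" by blast
  moreover obtain s where "Q s" "eventually_periodic s \<longleftrightarrow> eventually_periodic w"
    using assms \<open>P w\<close> unfolding periodicity_correspondence_def by blast
  ultimately show "\<exists>s. Q s \<and> R (eventually_periodic s)" by auto
next
  assume "\<exists>s. Q s \<and> R (eventually_periodic s)"
  then obtain s where "Q s" "R (eventually_periodic s)" by blast
  moreover obtain w where "P w" "eventually_periodic w \<longleftrightarrow> eventually_periodic s"
    using assms \<open>Q s\<close> unfolding periodicity_correspondence_def by blast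
  ultimately show "\<exists>w. P w \<and> R (eventually_periodic w)" by auto
qed

lemma sums_eq_of_le_same_sum:
  fixes f g :: "nat \<Rightarrow> real"
  assumes "\<And>n. f n \<le> g n" and "f sums x" and "g sums x"
  shows "f = g"
proof -
  have diff: "(\<lambda>n. g n - f n) sums 0"
    using sums_diff[OF assms(3,2)] by simp
  have "\<forall>n. g n - f n = 0"
    using suminf_eq_zero_iff[OF sums_summable[OF diff]] sums_unique[OF diff] assms(1)
    by simp
  then show ?thesis by auto
qed

lemma sums_affine_digits_iff:
  fixes S :: "nat \<Rightarrow> 'a::{real_normed_field, banach}"
  assumes "L \<noteq> 0" and "norm L < 1" and "A \<noteq> B"
  shows "(\<lambda>i. (A + (B - A) * S i) * L ^ i) sums T \<longleftrightarrow>
         (\<lambda>k. S k * L ^ Suc k) sums (L * (T - A / (1 - L)) / (B - A))"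
proof -
  have geom: "(\<lambda>i. A * L ^ i) sums (A / (1 - L))"
    using sums_mult[OF geometric_sums[OF assms(2)], of A] by simp
  have "(\<lambda>i. (A + (B - A) * S i) * L ^ i) sums T \<longleftrightarrow>
        (\<lambda>i. (B - A) * S i * L ^ i) sums (T - A / (1 - L))"
  proof
    assume "(\<lambda>i. (A + (B - A) * S i) * L ^ i) sums T"
    from sums_diff[OF this geom] show "(\<lambda>i. (B - A) * S i * L ^ i) sums (T - A / (1 - L))"
      by (simp add: algebra_simps)
  next
    assume "(\<lambda>i. (B - A) * S i * L ^ i) sums (T - A / (1 - L))"
    from sums_add[OF geom this] show "(\<lambda>i. (A + (B - A) * S i) * L ^ i) sums T"
      by (simp add: algebra_simps)
  qed
  also have "\<dots> \<longleftrightarrow> (\<lambda>i. L / (B - A) * ((B - A) * S i * L ^ i)) sums (L / (B - A) * (T - A / (1 - L)))"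
    using assms by (intro sums_mult_iff[symmetric]) simp
  also have "(\<lambda>i. L / (B - A) * ((B - A) * S i * L ^ i)) = (\<lambda>k. S k * L ^ Suc k)"
    using assms by (auto simp: field_simps)
  also have "L / (B - A) * (T - A / (1 - L)) = L * (T - A / (1 - L)) / (B - A)"
    by simp
  finally show ?thesis .
qed

lemma TDS_sol_affine_iff_TDS01_sol:
  assumes "0 < lam" and "lam < 1" and "a \<noteq> b" and "\<forall>k. s k \<in> {0, 1}"
  shows "TDS_sol lam t a b (\<lambda>i. a + (b - a) * s i) \<longleftrightarrow>
         TDS01_sol lam (lam * (t - a / (1 - lam)) / (b - a)) s"
proof -
  have "(\<lambda>i. (of_rat a + (of_rat b - of_rat a) * of_rat (s i)) * of_rat lam ^ i) sums (of_rat t :: real)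
    \<longleftrightarrow> (\<lambda>k. of_rat (s k) * of_rat lam ^ Suc k) sums
        (of_rat lam * (of_rat t - of_rat a / (1 - of_rat lam)) / (of_rat b - of_rat a) :: real)"
    using assms by (intro sums_affine_digits_iff) auto
  moreover have "\<forall>i. a + (b - a) * s i \<in> {a, b}"
    using assms(4) by auto
  ultimately show ?thesis
    using assms(4) unfolding TDS_sol_def TDS01_sol_def
    by (simp add: of_rat_add of_rat_mult of_rat_diff of_rat_divide)
qed

lemma TDS_sol_equal_weights_iff:
  assumes "0 < lam" and "lam < 1"
  shows "TDS_sol lam t a a w \<longleftrightarrow> w = (\<lambda>_. a) \<and> t = a / (1 - lam)"
proof -
  have geom: "(\<lambda>i. of_rat a * of_rat lam ^ i) sums (of_rat (a / (1 - lam)) :: real)"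
    using sums_mult[OF geometric_sums, of "real_of_rat lam" "of_rat a"] assms
    by (simp add: of_rat_divide of_rat_diff)
  show ?thesis
  proof
    assume sol: "TDS_sol lam t a a w"
    then have "w = (\<lambda>_. a)"
      unfolding TDS_sol_def by auto
    with sol have "(\<lambda>i. of_rat a * of_rat lam ^ i) sums (of_rat t :: real)"
      unfolding TDS_sol_def by simp
    with geom have "t = a / (1 - lam)"
      using sums_unique2 by fastforce
    with \<open>w = (\<lambda>_. a)\<close> show "w = (\<lambda>_. a) \<and> t = a / (1 - lam)" ..
  qed (use geom in \<open>auto simp: TDS_sol_def\<close>)
qed

lemma binary_expansion_le_one:
  assumes "\<forall>k. s k \<in> {0, 1}"
  shows "(\<lambda>k. of_rat (s k) * (1/2) ^ Suc k) sums x \<Longrightarrow> x \<le> (1::real)"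
    and "(\<lambda>k. of_rat (s k) * (1/2) ^ Suc k) sums (1::real) \<Longrightarrow> s = (\<lambda>_. 1)"
proof -
  have le: "of_rat (s k) * (1/2) ^ Suc k \<le> (1/2::real) ^ Suc k" for k
    using assms by (cases "s k = 0") auto
  show "(\<lambda>k. of_rat (s k) * (1/2) ^ Suc k) sums x \<Longrightarrow> x \<le> 1"
    using sums_le[OF le _ power_half_series] .
  assume "(\<lambda>k. of_rat (s k) * (1/2) ^ Suc k) sums (1::real)"
  from sums_eq_of_le_same_sum[OF le this power_half_series]
  show "s = (\<lambda>_. 1)"
    by (auto simp: fun_eq_iff)
qed

lemma TDS01_sol_half_one_iff: "TDS01_sol (1/2) 1 s \<longleftrightarrow> s = (\<lambda>_. 1)"
  using binary_expansion_le_one(2)[of s] power_half_series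
  by (auto simp: TDS01_sol_def of_rat_divide)

lemma not_TDS01_sol_half_two: "\<not> TDS01_sol (1/2) 2 s"
  using binary_expansion_le_one(1)[of s 2] by (auto simp: TDS01_sol_def of_rat_divide)

lemma periodicity_correspondence_TDS_sol_TDS01_sol:
  assumes "0 < lam" and "lam < 1" and "a \<noteq> b"
  shows "periodicity_correspondence (TDS_sol lam t a b)
           (TDS01_sol lam (lam * (t - a / (1 - lam)) / (b - a)))"
proof -
  define digit where "digit x = (x - a) / (b - a)" for x
  define letter where "letter x = a + (b - a) * x" for x
  have affine: "TDS_sol lam t a b (letter \<circ> s) \<longleftrightarrow>
      TDS01_sol lam (lam * (t - a / (1 - lam)) / (b - a)) s" if "\<forall>k. s k \<in> {0, 1}" for s
    using TDS_sol_affine_iff_TDS01_sol[OF assms that] unfolding letter_def comp_def .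
  show ?thesis
  proof (rule periodicity_correspondence_inj_comp)
    show "inj digit" "inj letter"
      using \<open>a \<noteq> b\<close> by (auto simp: inj_def digit_def letter_def)
  next
    fix w assume sol: "TDS_sol lam t a b w"
    then have letters: "\<forall>i. w i \<in> {a, b}"
      by (simp add: TDS_sol_def)
    then have "\<forall>k. (digit \<circ> w) k \<in> {0, 1}"
      using \<open>a \<noteq> b\<close> by (auto simp: digit_def)
    moreover have "letter \<circ> (digit \<circ> w) = w"
      using letters \<open>a \<noteq> b\<close> by (auto simp: fun_eq_iff letter_def digit_def)
    ultimately show "TDS01_sol lam (lam * (t - a / (1 - lam)) / (b - a)) (digit \<circ> w)"
      using affine sol by metis
  next
    fix s assume "TDS01_sol lam (lam * (t - a / (1 - lam)) / (b - a)) s"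
    then show "TDS_sol lam t a b (letter \<circ> s)"
      using affine by (simp add: TDS01_sol_def)
  qed
qed

lemma periodicity_correspondence_tds_red:
  assumes "0 < lam" and "lam < 1"
  shows "periodicity_correspondence (TDS_sol lam t a b)
           (TDS01_sol (fst (tds_red lam t a b)) (snd (tds_red lam t a b)))"
proof -
  consider (distinct_weights) "a \<noteq> b"
    | (equal_solvable) "a = b" "t = a / (1 - lam)"
    | (equal_unsolvable) "a = b" "t \<noteq> a / (1 - lam)"
    by blast
  then show ?thesis
  proof cases
    case distinct_weights
    then show ?thesis
      using periodicity_correspondence_TDS_sol_TDS01_sol[OF assms] by (simp add: tds_red_def)
  next
    case equal_solvable
    then show ?thesis
      using TDS_sol_equal_weights_iff[OF assms] TDS01_sol_half_one_iff eventually_periodic_const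
      by (auto simp: tds_red_def periodicity_correspondence_def)
  next
    case equal_unsolvable
    then show ?thesis
      using TDS_sol_equal_weights_iff[OF assms] not_TDS01_sol_half_two
      by (auto simp: tds_red_def periodicity_correspondence_def)
  qed
qed

theorem theorem3:
  fixes lam t a b :: rat
  assumes "0 < lam" and "lam < 1"
  shows "0 < fst (tds_red lam t a b) \<and> fst (tds_red lam t a b) < 1 \<and>
    ((\<exists>w. TDS_sol lam t a b w) \<longleftrightarrow>
       (\<exists>s. TDS01_sol (fst (tds_red lam t a b)) (snd (tds_red lam t a b)) s)) \<and>
    ((\<exists>w. TDS_sol lam t a b w \<and> eventually_periodic w) \<longleftrightarrow>
       (\<exists>s. TDS01_sol (fst (tds_red lam t a b)) (snd (tds_red lam t a b)) s \<and> eventually_periodic s)) \<and>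
    ((\<exists>w. TDS_sol lam t a b w \<and> \<not> eventually_periodic w) \<longleftrightarrow>
       (\<exists>s. TDS01_sol (fst (tds_red lam t a b)) (snd (tds_red lam t a b)) s \<and> \<not> eventually_periodic s))"
proof -
  have "0 < fst (tds_red lam t a b) \<and> fst (tds_red lam t a b) < 1"
    using assms by (simp add: tds_red_def)
  moreover note ex_iff =
    periodicity_correspondence_ex_iff[OF periodicity_correspondence_tds_red[OF assms]]
  ultimately show ?thesis
    using ex_iff[where R = "\<lambda>_. True"] ex_iff[where R = "\<lambda>p. p"] ex_iff[where R = Not] by simp
qed

end
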